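(* For every positive integer $s$ there exists $q_0=q_0(s)$ such that for every $q\ge q_0$ the complete $(s+1)$-partite graph $K_{q,q,\dots,q}$ (with $s+1$ parts of size $q$) contains $s-1$ pairwise edge-disjoint 2-factors whose union can be oriented so that, for all positive integers $c,d$ with $c+d=s+1$, the union of these oriented 2-factors contains no copy of $K_{c,d}$ in which all arcs are oriented towards the same part.
   Context: A 2-factor of a graph is a spanning 2-regular subgraph. $K_{c,d}$ denotes the complete bipartite graph with parts of sizes $c$ and $d$. *)

theory Defs
  imports Main
begin

definition mp_vertices :: "nat \<Rightarrow> nat \<Rightarrow> (nat \<times> nat) set" where
  "mp_vertices r q = {0..<r} \<times> {0..<q}"

definition mp_edges :: "nat \<Rightarrow> nat \<Rightarrow> (nat \<times> nat) set set" where
  "mp_edges r q = {{u, v} | u v. u \<in> mp_vertices r q \<and> v \<in> mp_vertices r q \<and> fst u \<noteq> fst v}"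

definition is_2factor :: "'a set \<Rightarrow> 'a set set \<Rightarrow> 'a set set \<Rightarrow> bool" where
  "is_2factor V E F \<longleftrightarrow> F \<subseteq> E \<and> (\<forall>v\<in>V. card {e \<in> F. v \<in> e} = 2)"

definition is_orientation :: "'a set set \<Rightarrow> ('a \<times> 'a) set \<Rightarrow> bool" where
  "is_orientation H D \<longleftrightarrow>
     (\<forall>u v. (u, v) \<in> D \<longrightarrow> {u, v} \<in> H \<and> (v, u) \<notin> D) \<and>
     (\<forall>u v. {u, v} \<in> H \<longrightarrow> (u, v) \<in> D \<or> (v, u) \<in> D)"

end

theory Submission
  imports Defs
begin

text \<open>Identify the parts with \<open>\<int>\<^sub>s\<^sub>+\<^sub>1\<close> and the vertices inside a part with \<open>\<int>\<^sub>q\<close>. For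
  \<open>t = 1, \<dots>, s - 1\<close> the permutation \<open>(i, j) \<mapsto> (i + 1, j + t)\<close> has no fixed points and no
  2-cycles, so its edges \<open>{v, \<sigma>\<^sub>t v}\<close> form a 2-factor; different \<open>t\<close> give edge-disjoint
  2-factors, and orienting every edge as \<open>v \<rightarrow> \<sigma>\<^sub>t v\<close> is consistent because an arc always
  moves one part forward. If all arcs go from \<open>A\<close> to \<open>B\<close>, then \<open>A\<close> and \<open>B\<close> each lie in a single
  part and every difference \<open>b - a\<close> of second coordinates lies in \<open>{1, \<dots>, s - 1}\<close> modulo \<open>q\<close>.
  Measuring from the element of \<open>A\<close> farthest behind some \<open>b\<^sub>0 \<in> B\<close>, and using that \<open>q\<close> is
  large so no wrap-around occurs, \<open>A\<close> lies strictly before \<open>B\<close> inside a window of \<open>s\<close>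
  consecutive residues; hence \<open>|A| + |B| \<le> s < c + d\<close>.\<close>

lemma card_incident_edges_of_permutation:
  assumes bij: "bij_betw \<sigma> V V" and no_2cycle: "\<And>u. u \<in> V \<Longrightarrow> \<sigma> (\<sigma> u) \<noteq> u" and v: "v \<in> V"
  shows "card {e \<in> (\<lambda>u. {u, \<sigma> u}) ` V. v \<in> e} = 2"
proof -
  define w where "w = inv_into V \<sigma> v"
  have w: "w \<in> V" "\<sigma> w = v"
    using bij v by (auto simp: w_def bij_betw_def inv_into_into f_inv_into_f)
  have "{e \<in> (\<lambda>u. {u, \<sigma> u}) ` V. v \<in> e} = {{v, \<sigma> v}, {w, v}}"
  proof (intro equalityI subsetI)
    fix e assume "e \<in> {e \<in> (\<lambda>u. {u, \<sigma> u}) ` V. v \<in> e}"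
    then obtain u where u: "u \<in> V" "e = {u, \<sigma> u}" "v \<in> e" by blast
    have "u = v \<or> u = w"
      using u w bij by (auto simp: bij_betw_def inj_on_def)
    then show "e \<in> {{v, \<sigma> v}, {w, v}}" using u w by auto
  qed (use v w in auto)
  moreover have "\<sigma> v \<noteq> v" "\<sigma> v \<noteq> w"
    using no_2cycle v w by metis+
  then have "{v, \<sigma> v} \<noteq> {w, v}" by (auto simp: doubleton_eq_iff)
  ultimately show ?thesis by simp
qed

lemma is_2factor_permutation_edges:
  assumes "bij_betw \<sigma> V V" "\<And>u. u \<in> V \<Longrightarrow> \<sigma> (\<sigma> u) \<noteq> u" "\<And>u. u \<in> V \<Longrightarrow> {u, \<sigma> u} \<in> E"
  shows "is_2factor V E ((\<lambda>u. {u, \<sigma> u}) ` V)"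
  using assms card_incident_edges_of_permutation[OF assms(1,2)] by (auto simp: is_2factor_def)

lemma is_orientation_arc_edges:
  assumes "\<And>u v. (u, v) \<in> D \<Longrightarrow> (v, u) \<notin> D"
  shows "is_orientation {{u, v} | u v. (u, v) \<in> D} D"
  using assms by (auto simp: is_orientation_def doubleton_eq_iff)

definition cdist :: "nat \<Rightarrow> nat \<Rightarrow> nat \<Rightarrow> nat" where
  "cdist q x y = (if x \<le> y then y - x else y + q - x)"

lemma cdist_add_mod:
  assumes "x < q"
  shows "cdist q x ((x + t) mod q) = t mod q"
proof -
  define r where "r = t mod q"
  have r: "r < q" "(x + t) mod q = (x + r) mod q"
    using assms by (simp_all add: r_def mod_add_right_eq)
  have "cdist q x ((x + r) mod q) = r"
  proof (cases "x + r < q")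
    case True
    then show ?thesis by (simp add: cdist_def)
  next
    case False
    then have "(x + r) mod q = x + r - q" using r assms by (simp add: le_mod_geq)
    then show ?thesis using r False assms by (simp add: cdist_def)
  qed
  then show ?thesis using r(2) by (simp add: r_def)
qed

lemma cdist_trans:
  "x < q \<Longrightarrow> y < q \<Longrightarrow> z < q \<Longrightarrow> cdist q x y + cdist q y z < q \<Longrightarrow>
    cdist q x z = cdist q x y + cdist q y z"
  by (auto simp: cdist_def)

lemma cdist_diff:
  "x < q \<Longrightarrow> y < q \<Longrightarrow> z < q \<Longrightarrow> cdist q y z \<le> cdist q x z \<Longrightarrow>
    cdist q x y = cdist q x z - cdist q y z"
  by (auto simp: cdist_def split: if_splits)

lemma inj_on_cdist: "x < q \<Longrightarrow> inj_on (cdist q x) {..<q}"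
  by (auto simp: inj_on_def cdist_def split: if_splits)

lemma card_add_card_le_if_cdist_between:
  assumes q: "2 * s \<le> q + 2"
    and A: "A \<subseteq> {..<q}" "A \<noteq> {}" and B: "B \<subseteq> {..<q}" "B \<noteq> {}"
    and AB: "\<And>a b. a \<in> A \<Longrightarrow> b \<in> B \<Longrightarrow> cdist q a b \<in> {1..<s}"
  shows "card A + card B \<le> s"
proof -
  obtain b0 where b0: "b0 \<in> B" using B by blast
  have fin: "finite A" "finite B" using A B finite_subset by blast+
  obtain a0 where a0: "a0 \<in> A" and max: "Max ((\<lambda>a. cdist q a b0) ` A) = cdist q a0 b0"
    using obtains_MAX[OF fin(1) A(2)] .
  have farthest: "cdist q a b0 \<le> cdist q a0 b0" if "a \<in> A" for a
    unfolding max[symmetric] using fin that by simp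
  define ofs where "ofs = cdist q a0"
  have lt: "x < q" if "x \<in> A \<union> B" for x using that A B by auto
  have B_below: "ofs b < s" if "b \<in> B" for b
    using AB a0 that unfolding ofs_def by auto
  have before: "ofs a < ofs b" if a: "a \<in> A" and b: "b \<in> B" for a b
  proof -
    have "ofs a = cdist q a0 b0 - cdist q a b0"
      unfolding ofs_def using cdist_diff farthest a a0 b0 lt by blast
    moreover have "cdist q a0 b0 < s" "1 \<le> cdist q a b0" "cdist q a b < s"
      using AB a a0 b b0 by auto
    moreover have "0 < q" using lt[of a] a by simp
    ultimately have "ofs a + cdist q a b < q" using q by arith
    then have "ofs b = ofs a + cdist q a b"
      unfolding ofs_def using cdist_trans a a0 b lt by blast
    then show "ofs a < ofs b" using AB a b by fastforce
  qed
  have "a0 < q" using a0 A by auto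
  then have "inj_on ofs (A \<union> B)"
    unfolding ofs_def using A B by (intro inj_on_subset[OF inj_on_cdist]) auto
  moreover have "ofs ` A \<inter> ofs ` B = {}"
    using before by fastforce
  ultimately have "card A + card B = card (ofs ` A \<union> ofs ` B)"
    using fin by (simp add: card_Un_disjoint card_image inj_on_Un)
  also have "\<dots> \<le> card {..<s}"
    using before B_below b0 by (intro card_mono) (auto dest: order.strict_trans)
  finally show ?thesis by simp
qed

lemma mod_add_cancel_right_nat: "(a + t) mod q = (b + t) mod q \<Longrightarrow> a mod q = b mod (q::nat)"
  using nat_mod_eq_iff by force

lemma bij_betw_add_mod: "bij_betw (\<lambda>j. (j + t) mod q) {0..<q} {0..<q::nat}"
proof -
  have "inj_on (\<lambda>j. (j + t) mod q) {0..<q}"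
    by (rule inj_onI) (metis mod_add_cancel_right_nat atLeastLessThan_iff mod_less)
  moreover have "(\<lambda>j. (j + t) mod q) ` {0..<q} \<subseteq> {0..<q}" by auto
  ultimately show ?thesis by (simp add: bij_betw_def endo_inj_surj)
qed

definition skew_shift :: "nat \<Rightarrow> nat \<Rightarrow> nat \<Rightarrow> nat \<times> nat \<Rightarrow> nat \<times> nat" where
  "skew_shift m q t = map_prod (\<lambda>i. (i + 1) mod m) (\<lambda>j. (j + t) mod q)"

lemma fst_skew_shift [simp]: "fst (skew_shift m q t v) = (fst v + 1) mod m"
  by (simp add: skew_shift_def)

lemma snd_skew_shift [simp]: "snd (skew_shift m q t v) = (snd v + t) mod q"
  by (simp add: skew_shift_def)

lemma bij_betw_skew_shift: "bij_betw (skew_shift m q t) (mp_vertices m q) (mp_vertices m q)"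
  unfolding skew_shift_def mp_vertices_def by (intro bij_betw_map_prod bij_betw_add_mod)

lemma skew_shift_no_2cycle:
  "3 \<le> m \<Longrightarrow> v \<in> mp_vertices m q \<Longrightarrow> skew_shift m q t' (skew_shift m q t v) \<noteq> v"
  by (cases v) (auto simp: skew_shift_def mp_vertices_def mod_Suc split: if_splits)

lemma fst_skew_shift_neq: "2 \<le> m \<Longrightarrow> v \<in> mp_vertices m q \<Longrightarrow> fst (skew_shift m q t v) \<noteq> fst v"
  by (cases v) (auto simp: skew_shift_def mp_vertices_def mod_Suc split: if_splits)

definition shift_factor :: "nat \<Rightarrow> nat \<Rightarrow> nat \<Rightarrow> (nat \<times> nat) set set" where
  "shift_factor m q t = (\<lambda>v. {v, skew_shift m q t v}) ` mp_vertices m q"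

definition shift_arcs :: "nat \<Rightarrow> nat \<Rightarrow> nat \<Rightarrow> ((nat \<times> nat) \<times> nat \<times> nat) set" where
  "shift_arcs m q s = {(v, skew_shift m q t v) | v t. v \<in> mp_vertices m q \<and> t \<in> {1..<s}}"

lemma is_2factor_shift_factor:
  assumes "3 \<le> m"
  shows "is_2factor (mp_vertices m q) (mp_edges m q) (shift_factor m q t)"
  unfolding shift_factor_def
proof (rule is_2factor_permutation_edges[OF bij_betw_skew_shift])
  fix v assume v: "v \<in> mp_vertices m q"
  show "skew_shift m q t (skew_shift m q t v) \<noteq> v" using skew_shift_no_2cycle assms v .
  have "skew_shift m q t v \<in> mp_vertices m q"
    using bij_betw_skew_shift v by (rule bij_betw_apply)
  moreover have "fst v \<noteq> fst (skew_shift m q t v)"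
    using fst_skew_shift_neq[of m v q t] assms v by simp
  ultimately show "{v, skew_shift m q t v} \<in> mp_edges m q" using v unfolding mp_edges_def by blast
qed

lemma shift_factors_disjoint:
  assumes "3 \<le> m" "t < q" "t' < q" "t \<noteq> t'"
  shows "shift_factor m q t \<inter> shift_factor m q t' = {}"
proof (rule ccontr)
  assume "shift_factor m q t \<inter> shift_factor m q t' \<noteq> {}"
  then obtain v w where v: "v \<in> mp_vertices m q" and w: "w \<in> mp_vertices m q"
    and eq: "{v, skew_shift m q t v} = {w, skew_shift m q t' w}"
    unfolding shift_factor_def by blast
  then consider "v = w" "skew_shift m q t v = skew_shift m q t' v"
    | "v = skew_shift m q t' w" "w = skew_shift m q t v"
    by (auto simp: doubleton_eq_iff)
  then show False
  proof cases
    case 1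
    then have "(snd v + t) mod q = (snd v + t') mod q"
      by (metis snd_skew_shift)
    moreover have "snd v < q" using v by (auto simp: mp_vertices_def)
    ultimately show False using cdist_add_mod[of "snd v" q] assms by (metis mod_less)
  next
    case 2
    then show False using skew_shift_no_2cycle assms(1) v by metis
  qed
qed

lemma is_orientation_shift_arcs:
  assumes "3 \<le> m \<or> s \<le> 1"
  shows "is_orientation (\<Union>t\<in>{1..<s}. shift_factor m q t) (shift_arcs m q s)"
proof -
  have "(\<Union>t\<in>{1..<s}. shift_factor m q t) = {{u, v} | u v. (u, v) \<in> shift_arcs m q s}"
    unfolding shift_factor_def shift_arcs_def by blast
  moreover have "(v, u) \<notin> shift_arcs m q s" if "(u, v) \<in> shift_arcs m q s" for u v
    using that assms skew_shift_no_2cycle by (auto simp: shift_arcs_def)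
  ultimately show ?thesis using is_orientation_arc_edges[of "shift_arcs m q s"] by simp
qed

lemma card_add_card_le_if_complete_shift_arcs:
  assumes q: "2 * s \<le> q + 2"
    and A: "A \<subseteq> mp_vertices m q" "A \<noteq> {}" and B: "B \<subseteq> mp_vertices m q" "B \<noteq> {}"
    and AB: "\<And>a b. a \<in> A \<Longrightarrow> b \<in> B \<Longrightarrow> (a, b) \<in> shift_arcs m q s"
  shows "card A + card B \<le> s"
proof -
  have arc: "\<exists>t\<in>{1..<s}. b = skew_shift m q t a" if "a \<in> A" "b \<in> B" for a b
    using AB[OF that] unfolding shift_arcs_def by blast
  obtain a1 b1 where a1: "a1 \<in> A" and b1: "b1 \<in> B" using A B by blast
  have bounds: "fst v < m" "snd v < q" if "v \<in> A \<union> B" for v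
    using that A B by (auto simp: mp_vertices_def)
  have "fst a = fst a1" if a: "a \<in> A" for a
  proof -
    have "(fst a + 1) mod m = (fst a1 + 1) mod m"
      using arc[OF a b1] arc[OF a1 b1] by (metis fst_skew_shift)
    then show ?thesis
      using bij_betw_add_mod[of 1 m] bounds a a1 by (auto simp: bij_betw_def inj_on_def)
  qed
  then have inj_A: "inj_on snd A" by (metis inj_onI prod_eqI)
  have "fst b = fst b1" if b: "b \<in> B" for b
    using arc[OF a1 b] arc[OF a1 b1] by auto
  then have inj_B: "inj_on snd B" by (metis inj_onI prod_eqI)
  have "card (snd ` A) + card (snd ` B) \<le> s"
  proof (rule card_add_card_le_if_cdist_between[OF q])
    show "snd ` A \<subseteq> {..<q}" "snd ` B \<subseteq> {..<q}" using bounds by auto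
    show "snd ` A \<noteq> {}" "snd ` B \<noteq> {}" using A B by auto
    fix x y assume "x \<in> snd ` A" "y \<in> snd ` B"
    then obtain a b where ab: "a \<in> A" "b \<in> B" "x = snd a" "y = snd b" by blast
    then obtain t where t: "t \<in> {1..<s}" "b = skew_shift m q t a" using arc by blast
    have "x < q" using bounds ab by simp
    then have "t < q" using t q by auto
    then show "cdist q x y \<in> {1..<s}"
      using t ab cdist_add_mod[OF \<open>x < q\<close>, of t] by simp
  qed
  then show ?thesis using inj_A inj_B by (simp add: card_image)
qed

theorem lemma2p3:
  fixes s :: nat
  assumes "s > 0"
  shows "\<exists>q0::nat. \<forall>q\<ge>q0. \<exists>(F :: nat \<Rightarrow> (nat \<times> nat) set set) (D :: ((nat \<times> nat) \<times> (nat \<times> nat)) set).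
           (\<forall>i<s - 1. is_2factor (mp_vertices (s + 1) q) (mp_edges (s + 1) q) (F i)) \<and>
           (\<forall>i<s - 1. \<forall>j<s - 1. i \<noteq> j \<longrightarrow> F i \<inter> F j = {}) \<and>
           is_orientation (\<Union>i<s - 1. F i) D \<and>
           (\<forall>c d. 0 < c \<and> 0 < d \<and> c + d = s + 1 \<longrightarrow>
              \<not> (\<exists>A B. A \<subseteq> mp_vertices (s + 1) q \<and> B \<subseteq> mp_vertices (s + 1) q \<and>
                     A \<inter> B = {} \<and> card A = c \<and> card B = d \<and>
                     (\<forall>a\<in>A. \<forall>b\<in>B. (a, b) \<in> D)))"
proof (rule exI[of _ "2 * s"], intro allI impI, goal_cases)
  case (1 q)
  define F where "F i = shift_factor (s + 1) q (Suc i)" for i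
  have "Suc ` {..<s - 1} = {1..<s}"
    using assms by (simp add: image_Suc_lessThan atLeastLessThanSuc_atLeastAtMost[symmetric])
  then have union: "(\<Union>i<s - 1. F i) = (\<Union>t\<in>{1..<s}. shift_factor (s + 1) q t)"
    unfolding F_def by (metis image_image)
  show ?case
  proof (intro exI[of _ F] exI[of _ "shift_arcs (s + 1) q s"] conjI allI impI notI)
    show "is_2factor (mp_vertices (s + 1) q) (mp_edges (s + 1) q) (F i)" if "i < s - 1" for i
      using that is_2factor_shift_factor unfolding F_def by simp
    show "F i \<inter> F j = {}" if "i < s - 1" "j < s - 1" "i \<noteq> j" for i j
      using that 1 shift_factors_disjoint unfolding F_def by simp
    show "is_orientation (\<Union>i<s - 1. F i) (shift_arcs (s + 1) q s)"
      unfolding union by (intro is_orientation_shift_arcs) linarith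
  next
    fix c d assume cd: "0 < c \<and> 0 < d \<and> c + d = s + 1"
    assume "\<exists>A B. A \<subseteq> mp_vertices (s + 1) q \<and> B \<subseteq> mp_vertices (s + 1) q \<and>
      A \<inter> B = {} \<and> card A = c \<and> card B = d \<and> (\<forall>a\<in>A. \<forall>b\<in>B. (a, b) \<in> shift_arcs (s + 1) q s)"
    then obtain A B where AB: "A \<subseteq> mp_vertices (s + 1) q" "B \<subseteq> mp_vertices (s + 1) q"
      "card A = c" "card B = d" "\<forall>a\<in>A. \<forall>b\<in>B. (a, b) \<in> shift_arcs (s + 1) q s" by blast
    moreover have "A \<noteq> {}" "B \<noteq> {}" using AB cd by auto
    moreover have "2 * s \<le> q + 2" using 1 by simp
    ultimately have "c + d \<le> s" using card_add_card_le_if_complete_shift_arcs by metis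
    with cd show False by simp
  qed
qed

end
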